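(* Let $P=(I,\emptyset,\{\omega\})$ be a reduced presentation. Then $\mathbf C_\omega$ is embeddable in $\mathbf B_\Delta$.
   Context: Wajsberg hoops: basic hoops satisfying $(x\to y)\to y\approx(y\to x)\to x$. $\mathbf{\L}_n=\Gamma(\mathbb Z,n)$ is the Wajsberg hoop on $\{0,\dots,n\}$ with $ab=\max\{a+b-n,0\}$, $a\to b=\min\{n-a+b,n\}$; $\mathbf C_\omega$ is the negative cone of $\mathbb Z$, i.e. the free monoid on one generator $c$ with $c^l\to c^m=c^{\max(l-m,0)}$. $X{\downarrow}$ = set of divisors of elements of $X$. A presentation $(I,\emptyset,\{\omega\})$ with $I$ a finite subset of $\mathbb N\setminus\{0\}$ is reduced if no $m\in I$ divides any element of $I\setminus\{m\}$. For such $P$: $\Delta=\{(k,h,2):0\le h<k\in I{\downarrow},\gcd(k,h)=1\}\cup\{(0,0,3)\}$; $\mathbf A_\Delta=\prod_{(k,h,2)\in\Delta}\mathbf{\L}_k\times\mathbf C_\omega$ (factor $\mathbf{\L}_k$ at index $(k,h,2)$, factor $\mathbf C_\omega$ at index $(0,0,3)$); $\bar g(k,h,2)=h\in\mathbf{\L}_k$, $\bar g(0,0,3)=c$; $\mathbf B_\Delta$ is the subalgebra of $\mathbf A_\Delta$ generated by $\bar g$. *)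

theory Defs
  imports Main "HOL-Library.FuncSet"
begin

record 'a hoop =
  hcarrier :: "'a set"
  hmult :: "'a \<Rightarrow> 'a \<Rightarrow> 'a"
  himp :: "'a \<Rightarrow> 'a \<Rightarrow> 'a"
  hone :: "'a"

text \<open>The Wajsberg hoop L_n on {0..n}: ab = max(a+b-n,0), a->b = min(n-a+b,n).
  Natural-number subtraction truncates at 0, which realises the max.\<close>
definition Luk :: "nat \<Rightarrow> nat hoop" where
  "Luk n = \<lparr> hcarrier = {0..n},
             hmult = (\<lambda>a b. a + b - n),
             himp = (\<lambda>a b. min (n - a + b) n),
             hone = n \<rparr>"

text \<open>C_omega: the negative cone of Z, i.e. the free monoid on one generator c.
  The element c^l is represented by its exponent l :: nat; c^l c^m = c^(l+m),
  the residuum is that of the negative cone of Z: c^l -> c^m = c^(max(m-l,0)), top = c^0.\<close>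
definition Comega :: "nat hoop" where
  "Comega = \<lparr> hcarrier = UNIV,
             hmult = (\<lambda>l m. l + m),
             himp = (\<lambda>l m. m - l),
             hone = 0 \<rparr>"

definition cgen :: nat where "cgen = 1"

definition prodH :: "'i set \<Rightarrow> ('i \<Rightarrow> 'a hoop) \<Rightarrow> ('i \<Rightarrow> 'a) hoop" where
  "prodH D F = \<lparr> hcarrier = (\<Pi>\<^sub>E i\<in>D. hcarrier (F i)),
                 hmult = (\<lambda>x y. \<lambda>i\<in>D. hmult (F i) (x i) (y i)),
                 himp = (\<lambda>x y. \<lambda>i\<in>D. himp (F i) (x i) (y i)),
                 hone = (\<lambda>i\<in>D. hone (F i)) \<rparr>"

inductive_set generated :: "'a hoop \<Rightarrow> 'a \<Rightarrow> 'a set" for H g where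
  gen_base: "g \<in> generated H g"
| gen_one: "hone H \<in> generated H g"
| gen_mult: "x \<in> generated H g \<Longrightarrow> y \<in> generated H g \<Longrightarrow> hmult H x y \<in> generated H g"
| gen_imp: "x \<in> generated H g \<Longrightarrow> y \<in> generated H g \<Longrightarrow> himp H x y \<in> generated H g"

definition subalg_gen :: "'a hoop \<Rightarrow> 'a \<Rightarrow> 'a hoop" where
  "subalg_gen H g = H \<lparr> hcarrier := generated H g \<rparr>"

definition hoop_embedding :: "('a \<Rightarrow> 'b) \<Rightarrow> 'a hoop \<Rightarrow> 'b hoop \<Rightarrow> bool" where
  "hoop_embedding f A B \<longleftrightarrow>
     f \<in> hcarrier A \<rightarrow> hcarrier B \<and> inj_on f (hcarrier A) \<and>
     f (hone A) = hone B \<and>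
     (\<forall>x\<in>hcarrier A. \<forall>y\<in>hcarrier A. f (hmult A x y) = hmult B (f x) (f y)) \<and>
     (\<forall>x\<in>hcarrier A. \<forall>y\<in>hcarrier A. f (himp A x y) = himp B (f x) (f y))"

definition embeddable :: "'a hoop \<Rightarrow> 'b hoop \<Rightarrow> bool" where
  "embeddable A B \<longleftrightarrow> (\<exists>f. hoop_embedding f A B)"

text \<open>Presentations (I, {}, {omega}): only I matters.\<close>
definition reduced_presentation :: "nat set \<Rightarrow> bool" where
  "reduced_presentation I \<longleftrightarrow> finite I \<and> 0 \<notin> I \<and>
     (\<forall>m\<in>I. \<forall>m'\<in>I - {m}. \<not> m dvd m')"

definition down :: "nat set \<Rightarrow> nat set" where
  "down X = {d. \<exists>m\<in>X. d dvd m}"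

definition Delta :: "nat set \<Rightarrow> (nat \<times> nat \<times> nat) set" where
  "Delta I = {(k, h, 2) | k h. h < k \<and> k \<in> down I \<and> gcd k h = 1} \<union> {(0, 0, 3)}"

definition factor :: "nat \<times> nat \<times> nat \<Rightarrow> nat hoop" where
  "factor i = (case i of (k, h, t) \<Rightarrow> if t = 3 then Comega else Luk k)"

definition A_Delta :: "nat set \<Rightarrow> (nat \<times> nat \<times> nat \<Rightarrow> nat) hoop" where
  "A_Delta I = prodH (Delta I) factor"

definition gbar :: "nat set \<Rightarrow> nat \<times> nat \<times> nat \<Rightarrow> nat" where
  "gbar I = (\<lambda>i\<in>Delta I. case i of (k, h, t) \<Rightarrow> if t = 3 then cgen else h)"

definition B_Delta :: "nat set \<Rightarrow> (nat \<times> nat \<times> nat \<Rightarrow> nat) hoop" where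
  "B_Delta I = subalg_gen (A_Delta I) (gbar I)"

end

theory Submission
  imports Defs
begin

text \<open>In each factor \<open>\<L>\<^sub>k\<close> the generator coordinate \<open>h < k\<close> satisfies \<open>h\<^sup>k = 0\<close>, and all
  such \<open>k\<close> are bounded by some \<open>N\<close> since \<open>I\<close> is finite and avoids \<open>0\<close>. So \<open>g\<^sup>N\<close> and \<open>g\<^sup>N\<^sup>+\<^sup>1\<close>
  vanish in every \<open>\<L>\<^sub>k\<close>-coordinate and are \<open>c\<^sup>N\<close>, \<open>c\<^sup>N\<^sup>+\<^sup>1\<close> in the \<open>C\<^sub>\<omega>\<close>-coordinate; hence
  \<open>g\<^sup>N \<rightarrow> g\<^sup>N\<^sup>+\<^sup>1\<close> is top in every \<open>\<L>\<^sub>k\<close> and \<open>c\<close> in \<open>C\<^sub>\<omega>\<close>, and its powers are a copy of \<open>C\<^sub>\<omega>\<close>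
  inside \<open>\<B>\<^sub>\<Delta>\<close>.\<close>

fun hpow :: "'a hoop \<Rightarrow> 'a \<Rightarrow> nat \<Rightarrow> 'a" where
  "hpow H x 0 = hone H"
| "hpow H x (Suc n) = hmult H (hpow H x n) x"

lemma hpow_in_generated: "hpow H g n \<in> generated H g"
  by (induction n) (auto intro: generated.intros)

lemma hpow_prodH: "i \<in> D \<Longrightarrow> hpow (prodH D F) x n i = hpow (F i) (x i) n"
  by (induction n) (simp_all add: prodH_def)

lemma hpow_Luk_le:
  assumes "h < k"
  shows "hpow (Luk k) h n \<le> k - n"
  by (induction n) (use assms in \<open>auto simp: Luk_def\<close>)

lemma hpow_Luk_eq_0: "h < k \<Longrightarrow> k \<le> n \<Longrightarrow> hpow (Luk k) h n = 0"
  using hpow_Luk_le[of h k n] by simp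

lemma hpow_Comega: "hpow Comega l n = n * l"
  by (induction n) (simp_all add: Comega_def)

lemma down_le_sum:
  assumes "finite I" "0 \<notin> I" "k \<in> down I"
  shows "k \<le> \<Sum> I"
proof -
  obtain m where m: "m \<in> I" "k dvd m"
    using assms(3) unfolding down_def by auto
  have "k \<le> m"
    using m assms(2) by (metis dvd_imp_le gr0I)
  also have "m \<le> \<Sum> I"
    using m(1) assms(1) by (metis sum_nonneg_leq_bound order_refl zero_le)
  finally show ?thesis .
qed

lemma Delta_cases:
  assumes "i \<in> Delta I"
  obtains "i = (0, 0, 3)" | k h where "i = (k, h, 2)" "h < k" "k \<in> down I"
  using assms unfolding Delta_def by auto

lemma Comega_index_in_Delta: "(0, 0, 3) \<in> Delta I"
  unfolding Delta_def by auto

text \<open>In a coordinate \<open>(k, h, 2)\<close> the value \<open>fst i = k\<close> is the top of \<open>\<L>\<^sub>k\<close>.\<close>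
definition cone_embed :: "nat set \<Rightarrow> nat \<Rightarrow> nat \<times> nat \<times> nat \<Rightarrow> nat" where
  "cone_embed I l = (\<lambda>i\<in>Delta I. if snd (snd i) = 3 then l else fst i)"

lemma inj_cone_embed: "inj (cone_embed I)"
proof (rule injI)
  fix l m assume "cone_embed I l = cone_embed I m"
  then have "cone_embed I l (0, 0, 3) = cone_embed I m (0, 0, 3)" by simp
  then show "l = m" using Comega_index_in_Delta by (simp add: cone_embed_def)
qed

lemma cone_embed_one: "cone_embed I 0 = hone (A_Delta I)"
  by (auto simp: A_Delta_def prodH_def cone_embed_def factor_def Comega_def Luk_def)

lemma cone_embed_mult: "hmult (A_Delta I) (cone_embed I l) (cone_embed I m) = cone_embed I (l + m)"
  by (auto simp: A_Delta_def prodH_def cone_embed_def factor_def Comega_def Luk_def)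

lemma cone_embed_imp: "himp (A_Delta I) (cone_embed I l) (cone_embed I m) = cone_embed I (m - l)"
  by (auto simp: A_Delta_def prodH_def cone_embed_def factor_def Comega_def Luk_def)

lemma cone_embed_1_eq_imp_hpow:
  assumes "finite I" "0 \<notin> I"
  defines "g \<equiv> gbar I" and "N \<equiv> \<Sum> I"
  shows "cone_embed I 1 = himp (A_Delta I) (hpow (A_Delta I) g N) (hpow (A_Delta I) g (Suc N))"
proof
  fix i
  show "cone_embed I 1 i = himp (A_Delta I) (hpow (A_Delta I) g N) (hpow (A_Delta I) g (Suc N)) i"
  proof (cases "i \<in> Delta I")
    case False
    then show ?thesis by (simp add: A_Delta_def prodH_def cone_embed_def)
  next
    case i: True
    then have pow: "hpow (A_Delta I) g n i = hpow (factor i) (g i) n" for n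
      by (simp add: A_Delta_def hpow_prodH)
    have imp: "himp (A_Delta I) x y i = himp (factor i) (x i) (y i)" for x y
      using i by (simp add: A_Delta_def prodH_def)
    from i show ?thesis
    proof (cases rule: Delta_cases)
      case 1
      then show ?thesis using i unfolding imp pow
        by (simp add: factor_def hpow_Comega cone_embed_def g_def gbar_def cgen_def
            Comega_def)
    next
      case (2 k h)
      have "k \<le> N" using down_le_sum[OF assms(1,2) 2(3)] by (simp add: N_def)
      then have "hpow (Luk k) h n = 0" if "N \<le> n" for n
        using that 2(2) hpow_Luk_eq_0 by simp
      then show ?thesis using i 2 unfolding imp pow
        by (simp add: factor_def cone_embed_def g_def gbar_def Luk_def del: hpow.simps)
    qed
  qed
qed

lemma cone_embed_in_generated:
  assumes "finite I" "0 \<notin> I"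
  shows "cone_embed I l \<in> generated (A_Delta I) (gbar I)"
proof (induction l)
  case 0
  show ?case by (simp add: cone_embed_one gen_one)
next
  case (Suc l)
  have "cone_embed I 1 \<in> generated (A_Delta I) (gbar I)"
    unfolding cone_embed_1_eq_imp_hpow[OF assms] by (intro gen_imp hpow_in_generated)
  from gen_mult[OF Suc this] show ?case by (simp add: cone_embed_mult)
qed

theorem theorem3p11:
  fixes I :: "nat set"
  assumes "reduced_presentation I"
  shows "embeddable Comega (B_Delta I)"
proof -
  from assms have "finite I" "0 \<notin> I" unfolding reduced_presentation_def by auto
  then have "hoop_embedding (cone_embed I) Comega (B_Delta I)"
    unfolding hoop_embedding_def B_Delta_def subalg_gen_def
    using inj_cone_embed cone_embed_in_generated cone_embed_one cone_embed_mult cone_embed_imp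
    by (auto simp: Comega_def)
  then show ?thesis unfolding embeddable_def by blast
qed

end
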